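(* For $n\ge2$, $$\mathbf{cf}_{n,2}(p,q)|_{p^0}=q^{\binom{n-1}{2}}[n-1]_q.$$ Moreover, $\mathbf{cf}_{4,2}(p,q)|_{p^1}=q^2+q^3$, and for $n\ge5$, $$\mathbf{cf}_{n,2}(p,q)|_{p^1}=\binom{n-2}{2}q^{\binom{n}{2}-3}+q^{\binom{n-1}{2}-2}\sum_{i=0}^{n-3}\left(\binom{n-3}{2}+i\right)q^i.$$
   Context: $F_1(p,q)=q$, $F_2(p,q)=q^2$ and $F_m(p,q)=qF_{m-1}(p,q)+pF_{m-2}(p,q)$ for $m\ge3$. Let $(x)_{\uparrow_{F,p,q,0}}=1$ and $(x)_{\uparrow_{F,p,q,k}}=x(x+F_1(p,q))\cdots(x+F_{k-1}(p,q))$ for $k\ge1$. Define the polynomials $\mathbf{cf}_{n,k}(p,q)$ for $0\le k\le n$ by $(x)_{\uparrow_{F,p,q,n}}=\sum_{k=0}^n\mathbf{cf}_{n,k}(p,q)x^k$. For a polynomial $f$ in $p$ with coefficients in $\mathbb{Q}[q]$, $f|_{p^s}$ denotes the coefficient of $p^s$. $[m]_q=1+q+\cdots+q^{m-1}$. *)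

theory Defs
  imports "HOL-Computational_Algebra.Polynomial"
begin

text \<open>Polynomials in p with coefficients in Q[q] are modelled as rat poly poly:
  the outer variable is p, the inner coefficients are polynomials in q.\<close>

definition qv :: "rat poly poly" where "qv = [:[:0, 1:]:]"
definition pv :: "rat poly poly" where "pv = [:0, 1:]"

text \<open>F 0 = 0 is an auxiliary convention so that the rising factorial starts with the factor x.\<close>
fun F :: "nat \<Rightarrow> rat poly poly" where
  "F 0 = 0"
| "F (Suc 0) = qv"
| "F (Suc (Suc 0)) = qv ^ 2"
| "F (Suc (Suc (Suc m))) = qv * F (Suc (Suc m)) + pv * F (Suc m)"

definition rising_F :: "nat \<Rightarrow> rat poly poly poly" where
  "rising_F n = (\<Prod>i<n. [:F i, 1:])"

definition cf :: "nat \<Rightarrow> nat \<Rightarrow> rat poly poly" where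
  "cf n k = coeff (rising_F n) k"

definition qint :: "nat \<Rightarrow> rat poly" where
  "qint m = (\<Sum>i<m. [:0, 1:] ^ i)"

end

theory Submission
  imports Defs
begin

text \<open>Modulo p^2 the recursion for F gives F_m = q^m + (m - 2) q^(m - 2) p.
  Multiplying in one factor x + F_n at a time gives cf(n+1, k+1) = F_n cf(n, k+1) + cf(n, k),
  so the p^0- and p^1-parts of cf(n, 1) and cf(n, 2) satisfy first-order recursions in n
  whose closed forms are checked by induction; the p^1-part of cf(n, 2) is driven by the
  three other parts.\<close>

abbreviation X :: "rat poly" where "X \<equiv> [:0, 1:]"

lemma Suc_choose_two: "Suc n choose 2 = (n choose 2) + n"
  by (simp add: numeral_2_eq_2)

lemma coeff_mult_1:
  fixes f g :: "'a::comm_semiring_0 poly"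
  shows "coeff (f * g) 1 = coeff f 0 * coeff g 1 + coeff f 1 * coeff g 0"
  by (simp add: coeff_mult)

lemma F_Suc_Suc_Suc: "F (Suc (Suc (Suc m))) = smult X (F (Suc (Suc m))) + pCons 0 (F (Suc m))"
  by (simp add: qv_def pv_def)

lemma F_1: "F (Suc 0) = [:X:]"
  by (simp add: qv_def)

lemma F_2: "F (Suc (Suc 0)) = [:X ^ 2:]"
  by (simp add: qv_def power2_eq_square)

text \<open>Keep \<open>coeff _ 1\<close> from being rewritten to \<open>coeff _ (Suc 0)\<close> and q-multiples from
  being unfolded into \<open>pCons\<close> terms; \<open>coeff_cf_k_s\<close> below is the coefficient of p^s in cf(_, k).\<close>
declare One_nat_def [simp del] mult_pCons_left [simp del] mult_pCons_right [simp del] F.simps(2-4) [simp del]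

lemma coeff_F_0: "n \<ge> 1 \<Longrightarrow> coeff (F n) 0 = X ^ n"
proof (induction n rule: F.induct)
  case (4 m)
  then show ?case by (cases m) (simp_all add: F_Suc_Suc_Suc F_2)
qed (simp_all add: F_1 F_2 power2_eq_square)

lemma coeff_F_1: "coeff (F n) 1 = of_nat (n - 2) * X ^ (n - 2)"
proof (induction n rule: F.induct)
  case (4 m)
  have "coeff (F (Suc (Suc (Suc m)))) 1 = X * (of_nat m * X ^ m) + X ^ Suc m"
    using 4 coeff_F_0[of "Suc m"] by (simp add: F_Suc_Suc_Suc One_nat_def)
  then show ?case by (simp add: algebra_simps)
qed (simp_all add: F_1 F_2 One_nat_def)

lemma cf_Suc_0: "cf (Suc n) 0 = 0"
  by (simp add: cf_def rising_F_def prod.lessThan_Suc_shift coeff_mult_0 del: prod.lessThan_Suc)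

lemma cf_Suc_Suc: "cf (Suc n) (Suc k) = F n * cf n (Suc k) + cf n k"
  by (simp add: cf_def rising_F_def mult.commute mult_pCons_left)

lemma cf_1_1: "cf 1 1 = 1"
  by (simp add: cf_def rising_F_def One_nat_def)

lemma cf_Suc_Suc_1: "cf (Suc (Suc n)) 1 = F (Suc n) * cf (Suc n) 1"
  using cf_Suc_Suc[of "Suc n" 0] by (simp add: cf_Suc_0 One_nat_def)

lemma coeff_cf_1_0: "coeff (cf (Suc n) 1) 0 = X ^ (Suc n choose 2)"
proof (induction n)
  case 0 then show ?case using cf_1_1 by (simp add: One_nat_def binomial_eq_0)
next
  case (Suc n)
  then show ?case
    by (simp add: cf_Suc_Suc_1 coeff_mult_0 coeff_F_0 Suc_choose_two[of "Suc n"] power_add mult.commute)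
qed

lemma coeff_cf_1_1_Suc:
  "coeff (cf (Suc (Suc n)) 1) 1 = X ^ Suc n * coeff (cf (Suc n) 1) 1
     + coeff (F (Suc n)) 1 * X ^ (Suc n choose 2)"
  unfolding cf_Suc_Suc_1 coeff_mult_1 coeff_cf_1_0 by (simp add: coeff_F_0)

text \<open>Exponents avoid truncated subtraction: (n choose 2) + 3n + 1 = (n + 3 choose 2) - 2.\<close>
lemma coeff_cf_1_1:
  "coeff (cf (n + 3) 1) 1 = of_nat (Suc n choose 2) * X ^ ((n choose 2) + 3 * n + 1)"
proof (induction n)
  case 0
  have "coeff (cf 2 1) 1 = 0"
    using coeff_cf_1_1_Suc[of 0] by (simp add: cf_def rising_F_def F_1 One_nat_def numeral_2_eq_2)
  then show ?case
    using coeff_cf_1_1_Suc[of 1] by (simp add: coeff_F_1 numeral_3_eq_3 numeral_2_eq_2)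
next
  case (Suc n)
  have "coeff (cf (Suc n + 3) 1) 1
      = X ^ (n + 3) * (of_nat (Suc n choose 2) * X ^ ((n choose 2) + 3 * n + 1))
        + of_nat (Suc n) * X ^ Suc n * X ^ ((n choose 2) + 3 * n + 3)"
    using coeff_cf_1_1_Suc[of "n + 2"] Suc.IH coeff_F_1[of "n + 3"]
    by (simp add: Suc_choose_two numeral_3_eq_3 add.assoc)
  also have "\<dots> = of_nat (Suc (Suc n) choose 2) * X ^ ((Suc n choose 2) + 3 * Suc n + 1)"
    by (simp add: Suc_choose_two algebra_simps flip: power_add del: power_Suc)
  finally show ?case .
qed

lemma qint_Suc: "qint (Suc n) = 1 + X * qint n"
  unfolding qint_def by (simp add: sum.lessThan_Suc_shift sum_distrib_left del: sum.lessThan_Suc)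

lemma qint_Suc_right: "qint (Suc n) = qint n + X ^ n"
  by (simp add: qint_def)

lemma qint_eq_sum_atMost: "qint (Suc n) = (\<Sum>i = 0..n. X ^ i)"
  by (simp add: qint_def atLeast0AtMost lessThan_Suc_atMost)

lemma cf_Suc_2: "cf (Suc n) 2 = F n * cf n 2 + cf n 1"
  using cf_Suc_Suc[of n 1] by (simp add: Suc_1)

lemma coeff_cf_2_0: "coeff (cf (Suc n) 2) 0 = X ^ (n choose 2) * qint n"
proof (induction n)
  case 0 then show ?case by (simp add: cf_def rising_F_def qint_def numeral_2_eq_2)
next
  case (Suc n)
  have "coeff (cf (Suc (Suc n)) 2) 0 = X ^ Suc n * (X ^ (n choose 2) * qint n) + X ^ ((n choose 2) + n)"
    using coeff_F_0[of "Suc n"]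
    by (simp add: cf_Suc_2[of "Suc n"] coeff_mult_0 Suc.IH coeff_cf_1_0 Suc_choose_two del: power_Suc)
  also have "\<dots> = X ^ (Suc n choose 2) * qint (Suc n)"
    by (simp add: Suc_choose_two qint_Suc algebra_simps flip: power_add)
  finally show ?case .
qed

lemma coeff_cf_2_0_add_4:
  "coeff (cf (n + 4) 2) 0 = X ^ ((n choose 2) + 3 * n + 3) * ((\<Sum>i = 0..n + 1. X ^ i) + X ^ (n + 2))"
proof -
  have "(n + 3) choose 2 = (n choose 2) + 3 * n + 3"
    by (simp add: numeral_3_eq_3 Suc_choose_two)
  moreover have "qint (n + 3) = (\<Sum>i = 0..n + 1. X ^ i) + X ^ (n + 2)"
    using qint_Suc_right[of "n + 2"] qint_eq_sum_atMost[of "n + 1"]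
    by (simp add: One_nat_def numeral_3_eq_3 numeral_2_eq_2)
  moreover have "n + 4 = Suc (n + 3)"
    by simp
  ultimately show ?thesis
    using coeff_cf_2_0[of "n + 3"] by (simp only:)
qed

lemma coeff_cf_3_2_1: "coeff (cf 3 2) 1 = 0"
  by (simp add: cf_def rising_F_def numeral_3_eq_3 numeral_2_eq_2 F_1 F_2 mult_pCons_left
      mult_pCons_right One_nat_def)

lemma sum_of_nat_add_mult_power_Suc:
  fixes x :: "'a::comm_semiring_1"
  shows "(\<Sum>i = 0..Suc K. of_nat (A + K + i) * x ^ i)
    = of_nat (A + K) + x * (\<Sum>i = 0..K. of_nat (A + i) * x ^ i) + of_nat (Suc K) * x * (\<Sum>i = 0..K. x ^ i)"
proof -
  have "(\<Sum>i = 0..Suc K. of_nat (A + K + i) * x ^ i)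
      = of_nat (A + K) + (\<Sum>i = 0..K. of_nat (A + K + Suc i) * x ^ Suc i)"
    unfolding sum.atLeast0_atMost_Suc_shift by (simp add: o_def ac_simps del: sum.atLeast0_atMost_Suc)
  also have "(\<Sum>i = 0..K. of_nat (A + K + Suc i) * x ^ Suc i)
      = (\<Sum>i = 0..K. x * (of_nat (A + i) * x ^ i) + of_nat (Suc K) * x * x ^ i)"
    by (rule sum.cong) (simp_all add: algebra_simps)
  finally show ?thesis
    by (simp add: sum.distrib sum_distrib_left add.assoc)
qed

lemma coeff_cf_2_1_Suc:
  "coeff (cf (Suc n) 2) 1 = coeff (F n) 0 * coeff (cf n 2) 1 + coeff (F n) 1 * coeff (cf n 2) 0
     + coeff (cf n 1) 1"
  by (simp add: cf_Suc_2 coeff_mult_1)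

lemma power_identity_cf_2_1_step:
  fixes x :: "'a::comm_semiring_1"
  shows "x ^ (n + 4) * (c * x ^ (T + 4 * n + 3) + x ^ (T + 3 * n + 1) * S)
        + k * x ^ (n + 2) * (x ^ (T + 3 * n + 3) * (G + x ^ (n + 2)))
        + c * x ^ (T + 4 * n + 4)
     = (c + k) * x ^ (T + 5 * n + 7) + x ^ (T + 4 * n + 4) * (c + x * S + k * x * G)"
proof -
  have "x ^ (n + 4) * x ^ (T + 4 * n + 3) = x ^ (T + 5 * n + 7)"
    and "x ^ (n + 4) * x ^ (T + 3 * n + 1) = x * x ^ (T + 4 * n + 4)"
    and "x ^ (n + 2) * x ^ (T + 3 * n + 3) = x * x ^ (T + 4 * n + 4)"
    and "x ^ (n + 2) * x ^ (T + 3 * n + 3) * x ^ (n + 2) = x ^ (T + 5 * n + 7)"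
    by (simp_all add: add_ac flip: power_add power_Suc)
  then show ?thesis
    by (simp add: algebra_simps del: power_Suc)
qed

lemma coeff_cf_2_1:
  "coeff (cf (n + 4) 2) 1 = of_nat ((n + 2) choose 2) * X ^ ((n choose 2) + 4 * n + 3)
     + X ^ ((n choose 2) + 3 * n + 1) * (\<Sum>i = 0..n + 1. of_nat (((n + 1) choose 2) + i) * X ^ i)"
proof (induction n)
  case 0
  have "qint 2 = 1 + X"
    by (simp add: qint_def numeral_2_eq_2)
  then have "coeff (F 3) 1 = X" and "coeff (cf 3 2) 0 = X * (1 + X)" and "coeff (cf 3 1) 1 = 0"
    using coeff_F_1[of 3] coeff_cf_2_0[of 2] coeff_cf_1_1[of 0] by simp_all
  then have "coeff (cf 4 2) 1 = X * (X * (1 + X))"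
    using coeff_cf_2_1_Suc[of 3] coeff_cf_3_2_1 by simp
  then show ?case
    by (simp add: choose_two One_nat_def algebra_simps power2_eq_square power3_eq_cube)
next
  case (Suc n)
  define T where "T = n choose 2"
  define c :: "rat poly" where "c = of_nat ((n + 2) choose 2)"
  define k :: "rat poly" where "k = of_nat (n + 2)"
  define S where "S = (\<Sum>i = 0..n + 1. of_nat (((n + 1) choose 2) + i) * X ^ i)"
  define G where "G = (\<Sum>i = 0..n + 1. X ^ i)"
  have F0: "coeff (F (n + 4)) 0 = X ^ (n + 4)" and F1: "coeff (F (n + 4)) 1 = k * X ^ (n + 2)"
    by (simp_all add: coeff_F_0 coeff_F_1 k_def)
  have cf2_0: "coeff (cf (n + 4) 2) 0 = X ^ (T + 3 * n + 3) * (G + X ^ (n + 2))"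
    unfolding T_def G_def by (rule coeff_cf_2_0_add_4)
  have "Suc n + 3 = n + 4" and "Suc (Suc n) choose 2 = (n + 2) choose 2"
    and "(Suc n choose 2) + 3 * Suc n + 1 = T + 4 * n + 4"
    by (simp_all add: T_def Suc_choose_two)
  then have cf1_1: "coeff (cf (n + 4) 1) 1 = c * X ^ (T + 4 * n + 4)"
    using coeff_cf_1_1[of "Suc n"] by (simp only: c_def)
  have IH: "coeff (cf (n + 4) 2) 1 = c * X ^ (T + 4 * n + 3) + X ^ (T + 3 * n + 1) * S"
    using Suc.IH by (simp only: T_def c_def S_def)
  have "coeff (cf (Suc n + 4) 2) 1
      = X ^ (n + 4) * (c * X ^ (T + 4 * n + 3) + X ^ (T + 3 * n + 1) * S)
        + k * X ^ (n + 2) * (X ^ (T + 3 * n + 3) * (G + X ^ (n + 2)))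
        + c * X ^ (T + 4 * n + 4)"
    using coeff_cf_2_1_Suc[of "n + 4"] by (simp only: F0 F1 cf2_0 cf1_1 IH add_Suc)
  also have "\<dots> = (c + k) * X ^ (T + 5 * n + 7) + X ^ (T + 4 * n + 4) * (c + X * S + k * X * G)"
    by (rule power_identity_cf_2_1_step)
  also have "\<dots> = of_nat ((Suc n + 2) choose 2) * X ^ ((Suc n choose 2) + 4 * Suc n + 3)
     + X ^ ((Suc n choose 2) + 3 * Suc n + 1) * (\<Sum>i = 0..Suc n + 1. of_nat (((Suc n + 1) choose 2) + i) * X ^ i)"
  proof -
    have "(Suc n choose 2) + 4 * Suc n + 3 = T + 5 * n + 7"
      and "(Suc n choose 2) + 3 * Suc n + 1 = T + 4 * n + 4"
      and "(Suc n + 2) choose 2 = ((n + 2) choose 2) + (n + 2)"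
      and "(n + 2) choose 2 = (Suc n choose 2) + Suc n"
      and "Suc (Suc n) choose 2 = (Suc n choose 2) + Suc n"
      and "Suc n + 1 = Suc (Suc n)" and "n + 1 = Suc n" and "n + 2 = Suc (Suc n)"
      by (simp_all add: T_def Suc_choose_two)
    moreover note sum_of_nat_add_mult_power_Suc[of "Suc n choose 2" "Suc n" X]
    ultimately show ?thesis
      by (simp only: c_def k_def S_def G_def of_nat_add)
  qed
  finally show ?case .
qed

theorem theorem15:
  shows "(\<forall>n\<ge>2. coeff (cf n 2) 0 = [:0, 1:] ^ ((n - 1) choose 2) * qint (n - 1))
    \<and> coeff (cf 4 2) 1 = [:0, 1:] ^ 2 + [:0, 1:] ^ 3
    \<and> (\<forall>n\<ge>5. coeff (cf n 2) 1 =
          of_nat ((n - 2) choose 2) * [:0, 1:] ^ ((n choose 2) - 3)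
          + [:0, 1:] ^ (((n - 1) choose 2) - 2)
            * (\<Sum>i = 0..n - 3. of_nat (((n - 3) choose 2) + i) * [:0, 1:] ^ i))"
proof (intro conjI allI impI)
  fix n :: nat
  assume "n \<ge> 2"
  then obtain m where "n = Suc m" by (cases n) auto
  then show "coeff (cf n 2) 0 = X ^ ((n - 1) choose 2) * qint (n - 1)"
    by (simp add: coeff_cf_2_0)
next
  show "coeff (cf 4 2) 1 = X ^ 2 + X ^ 3"
    using coeff_cf_2_1[of 0] by (simp add: choose_two One_nat_def power2_eq_square algebra_simps)
next
  fix n :: nat
  assume "n \<ge> 5"
  then obtain m where n: "n = m + 4"
    using le_Suc_ex[of 4 n] by auto
  then have "n = Suc (Suc (Suc (Suc m)))" and "n - 1 = Suc (Suc (Suc m))"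
    by simp_all
  then have "(n choose 2) - 3 = (m choose 2) + 4 * m + 3" and "((n - 1) choose 2) - 2 = (m choose 2) + 3 * m + 1"
    and "n - 2 = m + 2" and "n - 3 = m + 1"
    by (simp_all only: Suc_choose_two)
  then show "coeff (cf n 2) 1 =
          of_nat ((n - 2) choose 2) * X ^ ((n choose 2) - 3)
          + X ^ (((n - 1) choose 2) - 2)
            * (\<Sum>i = 0..n - 3. of_nat (((n - 3) choose 2) + i) * X ^ i)"
    using coeff_cf_2_1[of m, folded n] by (simp only:)
qed

end
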